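(* The poset $(\mathcal{F}_{\mathrm{ord}}(n),\le)$ is isomorphic to the Tamari lattice $\mathrm{Tam}_n$.
   Context: An ordered forest is a finite forest of rooted trees in which the children of each vertex are linearly ordered and the trees are linearly ordered (left to right); $\mathcal{F}_{\mathrm{ord}}(n)$ is the set of ordered forests on $n$ vertices up to isomorphism. Operation on a vertex $v$: if $v$ is a leaf nothing changes; otherwise the rightmost child $v'$ of $v$ (with its subtree) is detached from $v$ and either attached to the parent $w$ of $v$ immediately to the right of $v$, or, if $v$ is a root, made a new tree immediately to the right of the tree of $v$. $F'\lessdot F$ means $F'$ is obtained from $F$ by operating on a non-leaf vertex, and $\le$ is the reflexive-transitive closure of $\lessdot$. $\mathrm{Tam}_n$ is (isomorphic to) the set $\mathrm{Av}_n(312)$ of permutations with no $i_1<i_2<i_3$ and $\sigma(i_1)>\sigma(i_3)>\sigma(i_2)$, ordered as a subposet of $S_n$ under the right weak order (generated by $\sigma\circ(i\ i{+}1)\lessdot\sigma$ whenever $\sigma(i)>\sigma(i+1)$). *)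

theory Defs
  imports "HOL-Combinatorics.Combinatorics"
begin

text \<open>Ordered (plane) trees and forests. An ordered forest up to isomorphism is
exactly a list of ordered trees; an ordered tree is a root with a list of
(ordered) subtrees, listed left to right.\<close>

datatype otree = Node "otree list"

type_synonym oforest = "otree list"

fun tsize :: "otree \<Rightarrow> nat" where
  "tsize (Node cs) = Suc (sum_list (map tsize cs))"

definition fsize :: "oforest \<Rightarrow> nat" where
  "fsize F = sum_list (map tsize F)"

definition Ford :: "nat \<Rightarrow> oforest set" where
  "Ford n = {F. fsize F = n}"

text \<open>forest_step F F' means F' is obtained from F by operating on a non-leaf
vertex (i.e. F' \<lessdot> F). Operating on a root moves its rightmost child to a new
tree right after it; operating on a non-root vertex v with parent w is the same
operation performed on the list of children of w.\<close>

inductive forest_step :: "oforest \<Rightarrow> oforest \<Rightarrow> bool" where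
  root: "forest_step (ts1 @ Node (cs @ [c]) # ts2) (ts1 @ Node cs # c # ts2)"
| deep: "forest_step cs cs' \<Longrightarrow>
         forest_step (ts1 @ Node cs # ts2) (ts1 @ Node cs' # ts2)"

definition forest_le :: "oforest \<Rightarrow> oforest \<Rightarrow> bool" where
  "forest_le F' F \<longleftrightarrow> forest_step\<^sup>*\<^sup>* F F'"

definition avoids312 :: "nat \<Rightarrow> (nat \<Rightarrow> nat) \<Rightarrow> bool" where
  "avoids312 n \<sigma> \<longleftrightarrow> \<not> (\<exists>i1 i2 i3. 1 \<le> i1 \<and> i1 < i2 \<and> i2 < i3 \<and> i3 \<le> n \<and> i2 < i3 \<and> \<sigma> i1 > \<sigma> i3 \<and> \<sigma> i3 > \<sigma> i2)"

definition Av312 :: "nat \<Rightarrow> (nat \<Rightarrow> nat) set" where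
  "Av312 n = {\<sigma>. \<sigma> permutes {1..n} \<and> avoids312 n \<sigma>}"

text \<open>Right weak order on S_n: weak_step n \<sigma> \<tau> means \<tau> = \<sigma> \<circ> (i i+1) \<lessdot> \<sigma>
with \<sigma>(i) > \<sigma>(i+1).\<close>
definition weak_step :: "nat \<Rightarrow> (nat \<Rightarrow> nat) \<Rightarrow> (nat \<Rightarrow> nat) \<Rightarrow> bool" where
  "weak_step n \<sigma> \<tau> \<longleftrightarrow>
     (\<exists>i. 1 \<le> i \<and> i < n \<and> \<sigma> i > \<sigma> (Suc i) \<and> \<tau> = \<sigma> \<circ> transpose i (Suc i))"

definition weak_le :: "nat \<Rightarrow> (nat \<Rightarrow> nat) \<Rightarrow> (nat \<Rightarrow> nat) \<Rightarrow> bool" where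
  "weak_le n \<tau> \<sigma> \<longleftrightarrow> (weak_step n)\<^sup>*\<^sup>* \<sigma> \<tau>"

end

theory Submission
  imports Defs "HOL-Library.Sublist"
begin

(* Number the vertices of a forest in preorder and read the numbers in postorder. The resulting
   word avoids 312, every 312-avoiding permutation arises from exactly one forest, and the
   inversions of the word are exactly the pairs (ancestor, descendant). Operating on a vertex
   moves it in front of the subtree of its rightmost child in the word, a chain of adjacent
   transpositions each removing an inversion; hence F <= G implies the weak order relation.
   Conversely, going down in the weak order shrinks the inversion set, so it suffices to reach F
   from G whenever the ancestor relation of F is contained in that of G. Ancestor relations are
   transitive, and if (a, c) belongs to one and a < b < c then so does (a, b); this lets G always
   make a move that deletes an ancestor pair while keeping all those of F, and induction on the
   number of pairs concludes. *)

section \<open>Patterns in words\<close>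

lemma subseq_Cons_map_upt:
  "subseq (x # xs) (map f [lo..<hi]) \<longleftrightarrow>
     (\<exists>i. lo \<le> i \<and> i < hi \<and> f i = x \<and> subseq xs (map f [Suc i..<hi]))"
proof (induction "hi - lo" arbitrary: lo)
  case 0
  then show ?case by simp
next
  case (Suc d)
  have IH: "subseq (x # xs) (map f [Suc lo..<hi]) \<longleftrightarrow>
      (\<exists>i. Suc lo \<le> i \<and> i < hi \<and> f i = x \<and> subseq xs (map f [Suc i..<hi]))"
    using Suc.hyps(1)[of "Suc lo"] Suc.hyps(2) by simp
  have "lo < hi" using Suc.hyps(2) by simp
  then have "map f [lo..<hi] = f lo # map f [Suc lo..<hi]" by (simp add: upt_conv_Cons)
  then have "subseq (x # xs) (map f [lo..<hi]) \<longleftrightarrow>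
      (x = f lo \<and> subseq xs (map f [Suc lo..<hi])) \<or> subseq (x # xs) (map f [Suc lo..<hi])"
    using subseq_Cons'[of x xs "map f [Suc lo..<hi]"] by auto
  also have "\<dots> \<longleftrightarrow> (\<exists>i. lo \<le> i \<and> i < hi \<and> f i = x \<and> subseq xs (map f [Suc i..<hi]))"
    (is "_ \<longleftrightarrow> (\<exists>i. lo \<le> i \<and> ?P i)")
  proof
    assume "(x = f lo \<and> subseq xs (map f [Suc lo..<hi])) \<or> subseq (x # xs) (map f [Suc lo..<hi])"
    then show "\<exists>i. lo \<le> i \<and> ?P i"
      unfolding IH using \<open>lo < hi\<close> by (blast intro: order_refl dest: Suc_leD)
  next
    assume "\<exists>i. lo \<le> i \<and> ?P i"
    then obtain i where "lo \<le> i" "?P i" by blast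
    then show "(x = f lo \<and> subseq xs (map f [Suc lo..<hi])) \<or> subseq (x # xs) (map f [Suc lo..<hi])"
      unfolding IH by (cases "i = lo") auto
  qed
  finally show ?case .
qed

lemma subseq_pair_map_upt:
  "subseq [a, b] (map f [lo..<hi]) \<longleftrightarrow> (\<exists>i j. lo \<le> i \<and> i < j \<and> j < hi \<and> f i = a \<and> f j = b)"
  by (auto simp: subseq_Cons_map_upt Suc_le_eq)

lemma subseq_triple_map_upt:
  "subseq [a, b, c] (map f [lo..<hi]) \<longleftrightarrow>
     (\<exists>i j l. lo \<le> i \<and> i < j \<and> j < l \<and> l < hi \<and> f i = a \<and> f j = b \<and> f l = c)"
  (is "?l \<longleftrightarrow> ?r")
proof
  assume ?l
  then show ?r by (auto simp: subseq_Cons_map_upt[of a "[b, c]"] subseq_pair_map_upt Suc_le_eq)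
next
  assume ?r
  then obtain i j l where "lo \<le> i" "i < j" "j < l" "l < hi" "f i = a" "f j = b" "f l = c"
    by blast
  moreover from this have "subseq [b, c] (map f [Suc i..<hi])"
    unfolding subseq_pair_map_upt by (metis Suc_leI)
  ultimately show ?l unfolding subseq_Cons_map_upt[of a "[b, c]"] by (intro exI[of _ i]) auto
qed

lemma set_subseq_subset: "subseq xs ys \<Longrightarrow> set xs \<subseteq> set ys"
  by (induction rule: list_emb.induct) auto

lemma subseq_pair_append:
  "subseq [a, b] (A @ B) \<longleftrightarrow> subseq [a, b] A \<or> subseq [a, b] B \<or> (a \<in> set A \<and> b \<in> set B)"
  (is "?l \<longleftrightarrow> ?r")
proof
  assume ?l
  then show ?r by (auto simp: subseq_append_iff Cons_eq_append_conv subseq_singleton_left)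
next
  assume ?r
  then show ?l
    using list_emb_append_mono[of "(=)" "[a]" A "[b]" B]
    by (auto simp: subseq_singleton_left intro: subseq_drop_many subseq_rev_drop_many)
qed

lemma subseq_triple_append:
  "subseq [a, b, c] (A @ B) \<longleftrightarrow> subseq [a, b, c] A \<or> subseq [a, b, c] B
     \<or> (subseq [a, b] A \<and> c \<in> set B) \<or> (a \<in> set A \<and> subseq [b, c] B)"
  (is "?l \<longleftrightarrow> ?r")
proof
  assume ?l
  then show ?r by (auto simp: subseq_append_iff Cons_eq_append_conv subseq_singleton_left)
next
  assume ?r
  then show ?l
    using list_emb_append_mono[of "(=)" "[a, b]" A "[c]" B]
      list_emb_append_mono[of "(=)" "[a]" A "[b, c]" B]
    by (auto simp: subseq_singleton_left intro: subseq_drop_many subseq_rev_drop_many)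
qed

definition inversions :: "nat list \<Rightarrow> (nat \<times> nat) set" where
  "inversions w = {(a, b). a < b \<and> subseq [b, a] w}"

definition contains312 :: "nat list \<Rightarrow> bool" where
  "contains312 w \<longleftrightarrow> (\<exists>x y z. x < y \<and> y < z \<and> subseq [z, x, y] w)"

lemma avoids312_iff_not_contains312:
  "avoids312 n \<sigma> \<longleftrightarrow> \<not> contains312 (map \<sigma> [1..<Suc n])"
proof -
  have "contains312 (map \<sigma> [1..<Suc n]) \<longleftrightarrow>
      (\<exists>i1 i2 i3. 1 \<le> i1 \<and> i1 < i2 \<and> i2 < i3 \<and> i3 \<le> n \<and> \<sigma> i3 < \<sigma> i1 \<and> \<sigma> i2 < \<sigma> i3)"
    (is "_ \<longleftrightarrow> (\<exists>i1 i2 i3. ?P i1 i2 i3)")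
  proof
    assume "\<exists>i1 i2 i3. ?P i1 i2 i3"
    then obtain i1 i2 i3 where "?P i1 i2 i3" by blast
    then show "contains312 (map \<sigma> [1..<Suc n])"
      unfolding contains312_def subseq_triple_map_upt less_Suc_eq_le
      by (intro exI[of _ "\<sigma> i2"] exI[of _ "\<sigma> i3"] exI[of _ "\<sigma> i1"]) blast
  next
    assume "contains312 (map \<sigma> [1..<Suc n])"
    then obtain i j l where "?P i j l"
      unfolding contains312_def subseq_triple_map_upt less_Suc_eq_le by blast
    then show "\<exists>i1 i2 i3. ?P i1 i2 i3" by blast
  qed
  then show ?thesis unfolding avoids312_def by blast
qed

lemma mem_inversions_map_upt:
  "(a, b) \<in> inversions (map f [1..<Suc n]) \<longleftrightarrow>
     a < b \<and> (\<exists>p q. 1 \<le> p \<and> p < q \<and> q \<le> n \<and> f p = b \<and> f q = a)"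
  unfolding inversions_def subseq_pair_map_upt less_Suc_eq_le by blast

lemma inversions_singleton [simp]: "inversions [x] = {}"
  by (simp add: inversions_def)

lemma inversions_append:
  "inversions (A @ B) = inversions A \<union> inversions B \<union> {(a, b). a < b \<and> b \<in> set A \<and> a \<in> set B}"
  unfolding inversions_def subseq_pair_append by auto

lemma contains312_append_minD:
  assumes min: "\<forall>a\<in>set A. m < a" "\<forall>b\<in>set B. m < b"
    and "contains312 (A @ m # B)"
  shows "contains312 A \<or> contains312 B \<or> (\<exists>a\<in>set A. \<exists>b\<in>set B. b < a)"
proof -
  obtain x y z where "x < y" "y < z" and "subseq [z, x, y] (A @ m # B)"
    using assms(3) unfolding contains312_def by blast
  then consider "subseq [z, x, y] A" | "subseq [z, x, y] (m # B)"
    | "subseq [z, x] A" "y \<in> set (m # B)" | "z \<in> set A" "subseq [x, y] (m # B)"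
    unfolding subseq_triple_append by blast
  then show ?thesis
  proof cases
    case 1
    then show ?thesis using \<open>x < y\<close> \<open>y < z\<close> unfolding contains312_def by blast
  next
    case 2
    show ?thesis
    proof (cases "z = m")
      case True
      then have "x \<in> set B" using 2 set_subseq_subset[of "[x, y]" B] by simp
      then have "m < x" using min by simp
      then show ?thesis using True \<open>x < y\<close> \<open>y < z\<close> by simp
    next
      case False
      then show ?thesis using 2 \<open>x < y\<close> \<open>y < z\<close> unfolding contains312_def by auto
    qed
  next
    case 3
    then have "z \<in> set A" "m < x" using min set_subseq_subset[of "[z, x]" A] by auto
    then have "y \<in> set B" using 3 \<open>x < y\<close> by auto
    then show ?thesis using \<open>z \<in> set A\<close> \<open>y < z\<close> by blast
  next
    case 4
    then have "x \<in> set (m # B)" "y \<in> set (m # B)"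
      using set_subseq_subset[of "[x, y]" "m # B"] by auto
    moreover from this(1) have "m \<le> x" using min by auto
    ultimately have "y \<in> set B" using \<open>x < y\<close> by auto
    then show ?thesis using 4 \<open>y < z\<close> by blast
  qed
qed

lemma contains312_append_min:
  assumes min: "\<forall>a\<in>set A. m < a" "\<forall>b\<in>set B. m < b"
  shows "contains312 (A @ m # B) \<longleftrightarrow>
    contains312 A \<or> contains312 B \<or> (\<exists>a\<in>set A. \<exists>b\<in>set B. b < a)"
proof
  assume "contains312 (A @ m # B)"
  with min show "contains312 A \<or> contains312 B \<or> (\<exists>a\<in>set A. \<exists>b\<in>set B. b < a)"
    by (rule contains312_append_minD)
next
  assume "contains312 A \<or> contains312 B \<or> (\<exists>a\<in>set A. \<exists>b\<in>set B. b < a)"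
  then show "contains312 (A @ m # B)"
  proof (elim disjE bexE)
    assume "contains312 A"
    then show ?thesis unfolding contains312_def by (meson subseq_rev_drop_many)
  next
    assume "contains312 B"
    then show ?thesis unfolding contains312_def by (meson subseq_drop_many list_emb_Cons)
  next
    fix a b assume "a \<in> set A" "b \<in> set B" "b < a"
    then have "subseq [a, m, b] (A @ m # B)"
      unfolding subseq_triple_append by (simp add: subseq_singleton_left)
    then show ?thesis using min \<open>b \<in> set B\<close> \<open>b < a\<close> unfolding contains312_def by blast
  qed
qed

lemma initial_segment_of_interval:
  fixes a c :: nat
  assumes union: "S \<union> T = {a<..c}" and below: "\<forall>x\<in>S. \<forall>y\<in>T. x < y"
  shows "S = {a<..a + card S} \<and> T = {a + card S<..c}"
proof (cases "S = {}")
  case True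
  then show ?thesis using union by simp
next
  case False
  have "finite S" by (rule finite_subset[of _ "{a<..c}"]) (use union in blast, simp)
  define M where "M = Max S"
  have "M \<in> S" unfolding M_def using \<open>finite S\<close> False by (rule Max_in)
  then have "a < M" "M \<le> c" using union by auto
  have S: "S = {a<..M}"
  proof
    show "S \<subseteq> {a<..M}" using union \<open>finite S\<close> by (auto simp: M_def)
    show "{a<..M} \<subseteq> S"
    proof
      fix y assume y: "y \<in> {a<..M}"
      then have "y \<in> S \<union> T" using \<open>M \<le> c\<close> union by auto
      moreover have "y \<notin> T" using below \<open>M \<in> S\<close> y by (auto simp: not_less[symmetric])
      ultimately show "y \<in> S" by blast
    qed
  qed
  have "S \<inter> T = {}" using below by auto
  then have "T = {a<..c} - S" using union by blast
  also have "\<dots> = {M<..c}" using \<open>a < M\<close> unfolding S by auto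
  finally have "T = {M<..c}" .
  then show ?thesis using S \<open>a < M\<close> by simp
qed

section \<open>Preorder-labelled forests\<close>

lemma fsize_Nil [simp]: "fsize [] = 0"
  by (simp add: fsize_def)

lemma fsize_Cons [simp]: "fsize (Node cs # ts) = Suc (fsize cs + fsize ts)"
  by (simp add: fsize_def)

lemma fsize_append [simp]: "fsize (F @ G) = fsize F + fsize G"
  by (simp add: fsize_def)

lemma fsize_eq_0_iff: "fsize F = 0 \<longleftrightarrow> F = []"
proof (cases F)
  case (Cons t ts)
  then show ?thesis by (cases t) simp
qed simp

(* Vertices are numbered k+1, k+2, ... in preorder; the word lists these numbers in postorder,
   and (a, b) is an ancestor pair when a is a proper ancestor of b. *)
fun postorder_word :: "nat \<Rightarrow> oforest \<Rightarrow> nat list" where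
  "postorder_word k [] = []"
| "postorder_word k (Node cs # ts) =
     postorder_word (Suc k) cs @ Suc k # postorder_word (Suc k + fsize cs) ts"

fun ancestor_pairs :: "nat \<Rightarrow> oforest \<Rightarrow> (nat \<times> nat) set" where
  "ancestor_pairs k [] = {}"
| "ancestor_pairs k (Node cs # ts) =
     {Suc k} \<times> {Suc k<..Suc k + fsize cs}
     \<union> ancestor_pairs (Suc k) cs \<union> ancestor_pairs (Suc k + fsize cs) ts"

lemma postorder_word_append:
  "postorder_word k (F @ G) = postorder_word k F @ postorder_word (k + fsize F) G"
  by (induction k F rule: postorder_word.induct) (simp_all add: add.assoc)

lemma ancestor_pairs_append:
  "ancestor_pairs k (F @ G) = ancestor_pairs k F \<union> ancestor_pairs (k + fsize F) G"
  by (induction k F rule: ancestor_pairs.induct) (auto simp: add.assoc)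

lemma length_postorder_word [simp]: "length (postorder_word k F) = fsize F"
  by (induction k F rule: postorder_word.induct) simp_all

lemma set_postorder_word: "set (postorder_word k F) = {k<..k + fsize F}"
  by (induction k F rule: postorder_word.induct) auto

lemma distinct_postorder_word: "distinct (postorder_word k F)"
  by (induction k F rule: postorder_word.induct) (auto simp: set_postorder_word)

lemma ancestor_pairs_bounds:
  "(a, b) \<in> ancestor_pairs k F \<Longrightarrow> k < a \<and> a < b \<and> b \<le> k + fsize F"
  by (induction k F rule: ancestor_pairs.induct) auto

lemma inversions_postorder_word: "inversions (postorder_word k F) = ancestor_pairs k F"
proof (induction k F rule: postorder_word.induct)
  case (2 k cs ts)
  have w: "postorder_word k (Node cs # ts) =
      postorder_word (Suc k) cs @ [Suc k] @ postorder_word (Suc k + fsize cs) ts"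
    by simp
  show ?case
    unfolding w inversions_append using 2 by (auto simp: set_postorder_word)
qed (simp add: inversions_def)

lemma not_contains312_postorder_word: "\<not> contains312 (postorder_word k F)"
proof (induction k F rule: postorder_word.induct)
  case (2 k cs ts)
  then show ?case by (simp add: contains312_append_min set_postorder_word)
qed (simp add: contains312_def)

lemma postorder_word_surj:
  assumes "distinct w" "set w = {k<..k + length w}" "\<not> contains312 w"
  shows "\<exists>F. postorder_word k F = w"
  using assms
proof (induction "length w" arbitrary: w k rule: less_induct)
  case less
  show ?case
  proof (cases w)
    case Nil
    then have "postorder_word k [] = w" by simp
    then show ?thesis ..
  next
    case (Cons x xs)
    then have "Suc k \<in> set w" using less.prems(2) by simp
    then obtain A B where w: "w = A @ Suc k # B" by (blast dest: split_list)
    have "distinct A" "distinct B" "set A \<inter> set B = {}" "Suc k \<notin> set A" "Suc k \<notin> set B"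
      using less.prems(1) unfolding w by auto
    then have "set A \<union> set B = set w - {Suc k}" unfolding w by auto
    also have "\<dots> = {Suc k<..k + length w}" unfolding less.prems(2) by auto
    finally have AB: "set A \<union> set B = {Suc k<..k + length w}" .
    then have above: "\<forall>a\<in>set A. Suc k < a" "\<forall>b\<in>set B. Suc k < b" by auto
    have "\<not> contains312 A" "\<not> contains312 B" and "\<forall>a\<in>set A. \<forall>b\<in>set B. \<not> b < a"
      using less.prems(3) unfolding w contains312_append_min[OF above] by blast+
    with \<open>set A \<inter> set B = {}\<close> have below: "\<forall>a\<in>set A. \<forall>b\<in>set B. a < b"
      by (metis disjoint_iff linorder_neqE_nat)
    have "set A = {Suc k<..Suc k + length A}" "set B = {Suc k + length A<..k + length w}"
      using initial_segment_of_interval[OF AB below] \<open>distinct A\<close> by (simp_all add: distinct_card)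
    moreover have "length A < length w" "length B < length w"
      and "k + length w = Suc k + length A + length B" unfolding w by simp_all
    ultimately obtain cs ts where "postorder_word (Suc k) cs = A"
      and "postorder_word (Suc k + length A) ts = B"
      using less.hyps \<open>distinct A\<close> \<open>distinct B\<close> \<open>\<not> contains312 A\<close> \<open>\<not> contains312 B\<close>
      by metis
    then have "postorder_word k (Node cs # ts) = w"
      using length_postorder_word[of "Suc k" cs] unfolding w by simp
    then show ?thesis ..
  qed
qed

lemma ancestor_pairs_first_root:
  "{b. (Suc k, b) \<in> ancestor_pairs k (Node cs # ts)} = {Suc k<..Suc k + fsize cs}"
  by (auto dest: ancestor_pairs_bounds)

lemma ancestor_pairs_children:
  "ancestor_pairs (Suc k) cs =
     {(a, b) \<in> ancestor_pairs k (Node cs # ts). Suc k < a \<and> b \<le> Suc k + fsize cs}"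
  by (auto dest: ancestor_pairs_bounds)

lemma ancestor_pairs_siblings:
  "ancestor_pairs (Suc k + fsize cs) ts =
     {(a, b) \<in> ancestor_pairs k (Node cs # ts). Suc k + fsize cs < a}"
  by (auto dest: ancestor_pairs_bounds)

lemma ancestor_pairs_inj:
  assumes "fsize F = fsize G" "ancestor_pairs k F = ancestor_pairs k G"
  shows "F = G"
  using assms
proof (induction k F arbitrary: G rule: ancestor_pairs.induct)
  case (1 k)
  then show ?case using fsize_eq_0_iff[of G] by simp
next
  case (2 k cs ts)
  then have "G \<noteq> []" using fsize_eq_0_iff[of G] by simp
  then obtain g us where "G = g # us" by (cases G) simp_all
  moreover obtain ds where "g = Node ds" by (cases g)
  ultimately have G: "G = Node ds # us" by simp
  have "{Suc k<..Suc k + fsize cs} = {Suc k<..Suc k + fsize ds}"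
    unfolding ancestor_pairs_first_root[of k cs ts, symmetric]
      ancestor_pairs_first_root[of k ds us, symmetric]
    using 2(4) G by (simp only:)
  then have sizes: "fsize cs = fsize ds"
    by (metis card_greaterThanAtMost diff_add_inverse)
  have "ancestor_pairs (Suc k) cs =
      {(a, b) \<in> ancestor_pairs k (Node cs # ts). Suc k < a \<and> b \<le> Suc k + fsize cs}"
    by (rule ancestor_pairs_children)
  also have "\<dots> = {(a, b) \<in> ancestor_pairs k (Node ds # us). Suc k < a \<and> b \<le> Suc k + fsize ds}"
    using 2(4) sizes unfolding G by (simp only:)
  also have "\<dots> = ancestor_pairs (Suc k) ds"
    by (rule ancestor_pairs_children[symmetric])
  finally have "cs = ds" using 2(1) sizes by blast
  have "ancestor_pairs (Suc k + fsize cs) ts =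
      {(a, b) \<in> ancestor_pairs k (Node cs # ts). Suc k + fsize cs < a}"
    by (rule ancestor_pairs_siblings)
  also have "\<dots> = {(a, b) \<in> ancestor_pairs k (Node ds # us). Suc k + fsize ds < a}"
    using 2(4) sizes unfolding G by (simp only:)
  also have "\<dots> = ancestor_pairs (Suc k + fsize cs) us"
    using sizes by (simp only: ancestor_pairs_siblings[symmetric])
  finally have "ts = us" using 2(2) 2(3) sizes unfolding G by simp
  show ?case using G \<open>cs = ds\<close> \<open>ts = us\<close> by simp
qed

lemma ancestor_pairs_trans: "trans (ancestor_pairs k F)"
proof (induction k F rule: ancestor_pairs.induct)
  case (2 k cs ts)
  let ?m = "Suc k + fsize cs"
  show ?case
  proof (rule transI)
    fix a b c
    assume ab: "(a, b) \<in> ancestor_pairs k (Node cs # ts)"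
      and bc: "(b, c) \<in> ancestor_pairs k (Node cs # ts)"
    have "k < a" "a < b" "k < b" "b < c" using ab bc by (auto dest: ancestor_pairs_bounds)
    from ab consider "a = Suc k" "b \<le> ?m" | "(a, b) \<in> ancestor_pairs (Suc k) cs"
      | "(a, b) \<in> ancestor_pairs ?m ts" by auto
    then show "(a, c) \<in> ancestor_pairs k (Node cs # ts)"
    proof cases
      case 1
      then have "(b, c) \<in> ancestor_pairs (Suc k) cs"
        using bc \<open>a < b\<close> ancestor_pairs_bounds[of b c ?m ts] by auto
      then show ?thesis using 1 ancestor_pairs_bounds[of b c "Suc k" cs] by auto
    next
      case 2
      then have "(b, c) \<in> ancestor_pairs (Suc k) cs"
        using bc \<open>a < b\<close> ancestor_pairs_bounds[of a b "Suc k" cs]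
          ancestor_pairs_bounds[of b c ?m ts]
        by auto
      then show ?thesis using 2 "2.IH"(1) by (auto dest: transD)
    next
      case 3
      then have "(b, c) \<in> ancestor_pairs ?m ts"
        using bc \<open>a < b\<close> ancestor_pairs_bounds[of a b ?m ts]
          ancestor_pairs_bounds[of b c "Suc k" cs]
        by auto
      then show ?thesis using 3 "2.IH"(2) by (auto dest: transD)
    qed
  qed
qed simp

lemma ancestor_pairs_convex:
  "(a, c) \<in> ancestor_pairs k F \<Longrightarrow> a < b \<Longrightarrow> b < c \<Longrightarrow> (a, b) \<in> ancestor_pairs k F"
  by (induction k F arbitrary: a c rule: ancestor_pairs.induct) auto

lemma finite_ancestor_pairs: "finite (ancestor_pairs k F)"
  by (induction k F rule: ancestor_pairs.induct) auto

lemma ancestor_pairs_disjoint_root: "k \<le> j \<Longrightarrow> ({k} \<times> B) \<inter> ancestor_pairs j F = {}"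
  by (auto dest: ancestor_pairs_bounds)

lemma ancestor_pairs_children_siblings_disjoint:
  "ancestor_pairs (Suc k) cs \<inter> ancestor_pairs (Suc k + fsize cs) ts = {}"
  by (fastforce dest: ancestor_pairs_bounds)

section \<open>Moves that shrink the ancestor relation\<close>

lemma forest_step_fsize: "forest_step F F' \<Longrightarrow> fsize F' = fsize F"
  by (induction rule: forest_step.induct) (simp_all add: fsize_def)

lemma forest_step_Cons: "forest_step F F' \<Longrightarrow> forest_step (t # F) (t # F')"
proof (induction rule: forest_step.induct)
  case (root ts1 cs c ts2)
  then show ?case using forest_step.root[of "t # ts1" cs c ts2] by simp
next
  case (deep cs cs' ts1 ts2)
  then show ?case using forest_step.deep[of cs cs' "t # ts1" ts2] by simp
qed

definition step_toward :: "(nat \<times> nat) set \<Rightarrow> nat \<Rightarrow> oforest \<Rightarrow> oforest \<Rightarrow> bool" where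
  "step_toward R k G G' \<longleftrightarrow> forest_step G G' \<and>
     ancestor_pairs k G \<inter> R \<subseteq> ancestor_pairs k G' \<and> ancestor_pairs k G' \<subset> ancestor_pairs k G"

lemma shrink_disjoint_part:
  assumes "X' \<subset> X" "X \<inter> R \<subseteq> X'" "X \<inter> Y = {}"
  shows "(Y \<union> X) \<inter> R \<subseteq> Y \<union> X'" "Y \<union> X' \<subset> Y \<union> X"
  using assms by blast+

lemma step_toward_children:
  assumes "step_toward R (Suc k) cs cs'"
  shows "step_toward R k (Node cs # ts) (Node cs' # ts)"
proof -
  let ?rest = "{Suc k} \<times> {Suc k<..Suc k + fsize cs} \<union> ancestor_pairs (Suc k + fsize cs) ts"
  have "forest_step cs cs'" and keep: "ancestor_pairs (Suc k) cs \<inter> R \<subseteq> ancestor_pairs (Suc k) cs'"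
    and shrink: "ancestor_pairs (Suc k) cs' \<subset> ancestor_pairs (Suc k) cs"
    using assms unfolding step_toward_def by simp_all
  then have "fsize cs' = fsize cs" by (simp add: forest_step_fsize)
  have step: "forest_step (Node cs # ts) (Node cs' # ts)"
    using forest_step.deep[OF \<open>forest_step cs cs'\<close>, of "[]" ts] by simp
  have D: "ancestor_pairs k (Node cs # ts) = ?rest \<union> ancestor_pairs (Suc k) cs"
    "ancestor_pairs k (Node cs' # ts) = ?rest \<union> ancestor_pairs (Suc k) cs'"
    using \<open>fsize cs' = fsize cs\<close> by (simp_all add: Un_ac)
  have "({Suc k} \<times> {Suc k<..Suc k + fsize cs}) \<inter> ancestor_pairs (Suc k) cs = {}"
    by (rule ancestor_pairs_disjoint_root) simp
  then have "ancestor_pairs (Suc k) cs \<inter> ?rest = {}"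
    using ancestor_pairs_children_siblings_disjoint[of k cs ts] by blast
  then show ?thesis
    unfolding step_toward_def D using step shrink_disjoint_part[OF shrink keep] by simp
qed

lemma step_toward_siblings:
  assumes "step_toward R (Suc k + fsize cs) ts ts'"
  shows "step_toward R k (Node cs # ts) (Node cs # ts')"
proof -
  let ?rest = "{Suc k} \<times> {Suc k<..Suc k + fsize cs} \<union> ancestor_pairs (Suc k) cs"
  have "forest_step ts ts'"
    and keep: "ancestor_pairs (Suc k + fsize cs) ts \<inter> R \<subseteq> ancestor_pairs (Suc k + fsize cs) ts'"
    and shrink: "ancestor_pairs (Suc k + fsize cs) ts' \<subset> ancestor_pairs (Suc k + fsize cs) ts"
    using assms unfolding step_toward_def by simp_all
  have D: "ancestor_pairs k (Node cs # us) = ?rest \<union> ancestor_pairs (Suc k + fsize cs) us" for us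
    by simp
  have "({Suc k} \<times> {Suc k<..Suc k + fsize cs}) \<inter> ancestor_pairs (Suc k + fsize cs) ts = {}"
    by (rule ancestor_pairs_disjoint_root) simp
  then have "ancestor_pairs (Suc k + fsize cs) ts \<inter> ?rest = {}"
    using ancestor_pairs_children_siblings_disjoint[of k cs ts] by blast
  note parts = shrink_disjoint_part[OF shrink keep this]
  show ?thesis
    unfolding step_toward_def D using forest_step_Cons[OF \<open>forest_step ts ts'\<close>] parts by blast
qed

lemma ancestor_pairs_root_step:
  "ancestor_pairs k (Node cs # Node es # ts) =
     ancestor_pairs k (Node (cs @ [Node es]) # ts)
     - {Suc k} \<times> {Suc k + fsize cs<..Suc (Suc k + fsize cs + fsize es)}"
proof -
  let ?m = "Suc k + fsize cs"
  let ?moved = "{Suc k} \<times> {?m<..Suc (?m + fsize es)}"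
  let ?kept = "ancestor_pairs k (Node cs # Node es # ts)"
  have "?kept =
      {Suc k} \<times> {Suc k<..?m} \<union> ancestor_pairs (Suc k) cs
      \<union> ancestor_pairs ?m (Node es # ts)"
    by simp
  moreover have "ancestor_pairs k (Node (cs @ [Node es]) # ts) =
      {Suc k} \<times> {Suc k<..?m} \<union> ancestor_pairs (Suc k) cs
      \<union> ancestor_pairs ?m (Node es # ts) \<union> ?moved"
    by (auto simp: ancestor_pairs_append add.assoc)
  moreover have "?moved \<inter> ancestor_pairs (Suc k) cs = {}"
    "?moved \<inter> ancestor_pairs ?m (Node es # ts) = {}"
    by (rule ancestor_pairs_disjoint_root, simp)+
  ultimately have "?moved \<inter> ?kept = {}"
    and whole: "ancestor_pairs k (Node (cs @ [Node es]) # ts) = ?kept \<union> ?moved"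
    by auto
  then show ?thesis unfolding whole by blast
qed

lemma step_toward_root:
  assumes notin: "(Suc k, Suc (Suc k + fsize cs)) \<notin> R"
    and convex: "\<And>x y z. (x, z) \<in> R \<Longrightarrow> x < y \<Longrightarrow> y < z \<Longrightarrow> (x, y) \<in> R"
  shows "step_toward R k (Node (cs @ [Node es]) # ts) (Node cs # Node es # ts)"
proof -
  let ?d = "Suc (Suc k + fsize cs)"
  let ?moved = "{Suc k} \<times> {Suc k + fsize cs<..Suc (Suc k + fsize cs + fsize es)}"
  have step: "forest_step (Node (cs @ [Node es]) # ts) (Node cs # Node es # ts)"
    using forest_step.root[of "[]" cs "Node es" ts] by simp
  have "?moved \<inter> R = {}"
  proof (rule equals0I)
    fix p assume "p \<in> ?moved \<inter> R"
    then obtain x where "?d \<le> x" "(Suc k, x) \<in> R" by (force simp: Suc_le_eq)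
    then have "(Suc k, ?d) \<in> R" using convex[of "Suc k" x ?d] by (cases "x = ?d") auto
    with notin show False by simp
  qed
  moreover have "(Suc k, ?d) \<in> ancestor_pairs k (Node (cs @ [Node es]) # ts)" "(Suc k, ?d) \<in> ?moved"
    by simp_all
  ultimately show ?thesis
    unfolding step_toward_def ancestor_pairs_root_step using step by blast
qed

(* Let d be the root of the last child of the first root. If (Suc k, d) is not in R, then by
   convexity no pair deleted by the root move lies in R; otherwise b lies below d, and by
   transitivity (d, b) is not in R. *)
lemma step_toward_from_root_pair:
  assumes "(Suc k, b) \<notin> R" "Suc k < b" "b \<le> Suc k + fsize ds" "trans R"
    and convex: "\<And>x y z. (x, z) \<in> R \<Longrightarrow> x < y \<Longrightarrow> y < z \<Longrightarrow> (x, y) \<in> R"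
  shows "(\<exists>G'. step_toward R k (Node ds # us) G') \<or>
    (\<exists>d. (d, b) \<in> ancestor_pairs (Suc k) ds \<and> (d, b) \<notin> R)"
proof -
  from assms(2,3) have "ds \<noteq> []" by auto
  then obtain cs e where "ds = cs @ [e]" by (cases ds rule: rev_cases) simp_all
  moreover obtain es where "e = Node es" by (cases e)
  ultimately have ds: "ds = cs @ [Node es]" by simp
  let ?d = "Suc (Suc k + fsize cs)"
  show ?thesis
  proof (cases "(Suc k, ?d) \<in> R")
    case False
    have "step_toward R k (Node (cs @ [Node es]) # us) (Node cs # Node es # us)"
      by (rule step_toward_root[OF False]) (rule convex)
    then show ?thesis unfolding ds by blast
  next
    case True
    have "?d < b"
    proof (rule ccontr)
      assume "\<not> ?d < b"
      then have "(Suc k, b) \<in> R"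
        using True convex[of "Suc k" ?d b] assms(2) by (cases "b = ?d") auto
      then show False using assms(1) by simp
    qed
    then have "(?d, b) \<in> ancestor_pairs (Suc k) ds"
      using assms(3) unfolding ds by (simp add: ancestor_pairs_append)
    moreover have "(?d, b) \<notin> R" using True assms(1,4) by (meson transD)
    ultimately show ?thesis by blast
  qed
qed

lemma exists_step_toward:
  assumes "(a, b) \<in> ancestor_pairs k G" "(a, b) \<notin> R" "trans R"
    and convex: "\<And>x y z. (x, z) \<in> R \<Longrightarrow> x < y \<Longrightarrow> y < z \<Longrightarrow> (x, y) \<in> R"
  shows "\<exists>G'. step_toward R k G G'"
  using assms(1,2)
proof (induction k G arbitrary: a b rule: ancestor_pairs.induct)
  case (1 k)
  then show ?case by simp
next
  case (2 k ds us)
  from "2.prems"(1) consider "a = Suc k" "Suc k < b" "b \<le> Suc k + fsize ds"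
    | "(a, b) \<in> ancestor_pairs (Suc k) ds" | "(a, b) \<in> ancestor_pairs (Suc k + fsize ds) us"
    by auto
  then show ?case
  proof cases
    case 2
    then obtain ds' where "step_toward R (Suc k) ds ds'" using "2.IH"(1) "2.prems"(2) by blast
    then show ?thesis using step_toward_children by blast
  next
    case 3
    then obtain us' where "step_toward R (Suc k + fsize ds) us us'"
      using "2.IH"(2) "2.prems"(2) by blast
    then show ?thesis using step_toward_siblings by blast
  next
    case 1
    then have "(Suc k, b) \<notin> R" using "2.prems"(2) by simp
    have "(\<exists>G'. step_toward R k (Node ds # us) G') \<or>
        (\<exists>d. (d, b) \<in> ancestor_pairs (Suc k) ds \<and> (d, b) \<notin> R)"
      by (rule step_toward_from_root_pair[OF \<open>(Suc k, b) \<notin> R\<close> 1(2,3) \<open>trans R\<close>]) (rule convex)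
    then show ?thesis using "2.IH"(1) step_toward_children by blast
  qed
qed

lemma ancestor_pairs_subset_imp_steps:
  assumes "fsize F = fsize G" "ancestor_pairs k F \<subseteq> ancestor_pairs k G"
  shows "forest_step\<^sup>*\<^sup>* G F"
  using assms
proof (induction "card (ancestor_pairs k G)" arbitrary: G rule: less_induct)
  case less
  show ?case
  proof (cases "ancestor_pairs k F = ancestor_pairs k G")
    case True
    then have "F = G" using ancestor_pairs_inj less.prems(1) by blast
    then show ?thesis by simp
  next
    case False
    then obtain p where "p \<in> ancestor_pairs k G" "p \<notin> ancestor_pairs k F"
      using less.prems(2) by blast
    moreover obtain a b where "p = (a, b)" by (cases p)
    ultimately have ab: "(a, b) \<in> ancestor_pairs k G" "(a, b) \<notin> ancestor_pairs k F" by simp_all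
    have "\<exists>G'. step_toward (ancestor_pairs k F) k G G'"
      by (rule exists_step_toward[OF ab ancestor_pairs_trans]) (rule ancestor_pairs_convex)
    then obtain G' where "step_toward (ancestor_pairs k F) k G G'" ..
    then have step: "forest_step G G'"
      and keep: "ancestor_pairs k G \<inter> ancestor_pairs k F \<subseteq> ancestor_pairs k G'"
      and shrink: "ancestor_pairs k G' \<subset> ancestor_pairs k G"
      unfolding step_toward_def by simp_all
    have "ancestor_pairs k F \<subseteq> ancestor_pairs k G'" using keep less.prems(2) by blast
    moreover have "card (ancestor_pairs k G') < card (ancestor_pairs k G)"
      using shrink by (simp add: psubset_card_mono finite_ancestor_pairs)
    moreover have "fsize F = fsize G'" using less.prems(1) forest_step_fsize[OF step] by simp
    ultimately have "forest_step\<^sup>*\<^sup>* G' F" using less.hyps by simp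
    with step show ?thesis by (rule converse_rtranclp_into_rtranclp)
  qed
qed

section \<open>Words, permutations and the weak order\<close>

definition swap_step :: "nat list \<Rightarrow> nat list \<Rightarrow> bool" where
  "swap_step w w' \<longleftrightarrow> (\<exists>P a b S. w = P @ [a, b] @ S \<and> b < a \<and> w' = P @ [b, a] @ S)"

lemma swap_steps_context:
  "swap_step\<^sup>*\<^sup>* w w' \<Longrightarrow> swap_step\<^sup>*\<^sup>* (P @ w @ S) (P @ w' @ S)"
proof (induction rule: rtranclp_induct)
  case (step w' w'')
  then obtain Q a b T where "w' = Q @ [a, b] @ T" "b < a" "w'' = Q @ [b, a] @ T"
    unfolding swap_step_def by blast
  then have "swap_step (P @ w' @ S) (P @ w'' @ S)"
    unfolding swap_step_def
    by (intro exI[of _ "P @ Q"] exI[of _ a] exI[of _ b] exI[of _ "T @ S"]) simp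
  with step.IH show ?case by (rule rtranclp.rtrancl_into_rtrancl)
qed simp

lemma swap_steps_move_left:
  "\<forall>b\<in>set B. x < b \<Longrightarrow> swap_step\<^sup>*\<^sup>* (P @ B @ [x] @ S) (P @ [x] @ B @ S)"
proof (induction B arbitrary: S rule: rev_induct)
  case (snoc b B)
  have "swap_step (P @ B @ [b, x] @ S) (P @ B @ [x, b] @ S)"
    unfolding swap_step_def using snoc.prems
    by (intro exI[of _ "P @ B"] exI[of _ b] exI[of _ x] exI[of _ S]) simp
  moreover have "swap_step\<^sup>*\<^sup>* (P @ B @ [x] @ (b # S)) (P @ [x] @ B @ (b # S))"
    using snoc by simp
  ultimately show ?case by (simp add: converse_rtranclp_into_rtranclp)
qed simp

lemma forest_step_swap_steps:
  "forest_step G G' \<Longrightarrow> swap_step\<^sup>*\<^sup>* (postorder_word k G) (postorder_word k G')"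
proof (induction arbitrary: k rule: forest_step.induct)
  case (root ts1 cs c ts2)
  let ?m = "Suc (k + fsize ts1)"
  have "\<forall>b\<in>set (postorder_word (?m + fsize cs) [c]). ?m < b"
    by (simp add: set_postorder_word)
  then have "swap_step\<^sup>*\<^sup>*
      ((postorder_word k ts1 @ postorder_word ?m cs) @ postorder_word (?m + fsize cs) [c] @ [?m]
        @ postorder_word (?m + fsize cs + fsize [c]) ts2)
      ((postorder_word k ts1 @ postorder_word ?m cs) @ [?m] @ postorder_word (?m + fsize cs) [c]
        @ postorder_word (?m + fsize cs + fsize [c]) ts2)"
    by (rule swap_steps_move_left)
  then show ?case by (cases c) (simp add: postorder_word_append add.assoc)
next
  case (deep cs cs' ts1 ts2)
  have "fsize cs' = fsize cs" using deep.hyps by (rule forest_step_fsize)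
  then show ?case
    using swap_steps_context[OF deep.IH[of "Suc (k + fsize ts1)"], of "postorder_word k ts1"
        "Suc (k + fsize ts1) # postorder_word (Suc (k + fsize ts1) + fsize cs) ts2"]
    by (simp add: postorder_word_append)
qed

definition word_perm :: "nat list \<Rightarrow> nat \<Rightarrow> nat" where
  "word_perm w i = (if 1 \<le> i \<and> i \<le> length w then w ! (i - 1) else i)"

lemma map_word_perm: "map (word_perm w) [1..<Suc (length w)] = w"
proof (rule nth_equalityI)
  fix i assume "i < length (map (word_perm w) [1..<Suc (length w)])"
  then show "map (word_perm w) [1..<Suc (length w)] ! i = w ! i"
    by (simp add: word_perm_def del: upt_Suc)
qed (simp del: upt_Suc)

lemma word_perm_map:
  assumes "\<sigma> permutes {1..n}"
  shows "word_perm (map \<sigma> [1..<Suc n]) = \<sigma>"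
proof
  fix i
  show "word_perm (map \<sigma> [1..<Suc n]) i = \<sigma> i"
    using permutes_not_in[OF assms, of i] by (auto simp: word_perm_def simp del: upt_Suc)
qed

lemma word_perm_permutes:
  assumes "distinct w" "set w = {1..length w}"
  shows "word_perm w permutes {1..length w}"
proof (rule bij_imp_permutes)
  let ?I = "{1..length w}"
  have "distinct (map (word_perm w) [1..<Suc (length w)])"
    "set (map (word_perm w) [1..<Suc (length w)]) = ?I"
    using assms by (simp_all only: map_word_perm)
  then show "bij_betw (word_perm w) ?I ?I"
    by (simp add: bij_betw_def distinct_map atLeastLessThanSuc_atLeastAtMost del: upt_Suc)
next
  fix i assume "i \<notin> {1..length w}"
  then show "word_perm w i = i" by (auto simp: word_perm_def)
qed

lemma swap_step_weak_step:
  assumes "swap_step w w'"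
  shows "weak_step (length w) (word_perm w) (word_perm w')"
proof -
  obtain P a b S where w: "w = P @ [a, b] @ S" "b < a" and w': "w' = P @ [b, a] @ S"
    using assms unfolding swap_step_def by blast
  let ?i = "Suc (length P)"
  have "word_perm w' = word_perm w \<circ> transpose ?i (Suc ?i)"
  proof
    fix x
    show "word_perm w' x = (word_perm w \<circ> transpose ?i (Suc ?i)) x"
    proof (cases "x = ?i \<or> x = Suc ?i")
      case True
      then show ?thesis using w w' by (auto simp: word_perm_def nth_append)
    next
      case False
      then have "transpose ?i (Suc ?i) x = x" by (auto simp: transpose_def)
      moreover have "word_perm w' x = word_perm w x"
        using False w w' by (auto simp: word_perm_def nth_append nth_Cons split: nat.splits)
      ultimately show ?thesis by simp
    qed
  qed
  moreover have "word_perm w (Suc ?i) < word_perm w ?i"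
    using w by (simp add: word_perm_def nth_append)
  ultimately show ?thesis unfolding weak_step_def using w by (intro exI[of _ ?i]) auto
qed

lemma swap_steps_length: "swap_step\<^sup>*\<^sup>* w w' \<Longrightarrow> length w' = length w"
  by (induction rule: rtranclp_induct) (auto simp: swap_step_def)

lemma swap_steps_weak_steps:
  assumes "swap_step\<^sup>*\<^sup>* w w'"
  shows "(weak_step (length w))\<^sup>*\<^sup>* (word_perm w) (word_perm w')"
  using assms
proof (induction rule: rtranclp_induct)
  case (step w' w'')
  have "weak_step (length w) (word_perm w') (word_perm w'')"
    using swap_step_weak_step[OF step.hyps(2)] swap_steps_length[OF step.hyps(1)] by simp
  with step.IH show ?case by (rule rtranclp.rtrancl_into_rtrancl[where r = "weak_step (length w)"])
qed simp

lemma weak_step_inversions: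
  assumes "weak_step n \<sigma> \<tau>"
  shows "inversions (map \<tau> [1..<Suc n]) \<subseteq> inversions (map \<sigma> [1..<Suc n])"
proof (rule subrelI)
  fix a b assume "(a, b) \<in> inversions (map \<tau> [1..<Suc n])"
  then obtain p q where "a < b" "1 \<le> p" "p < q" "q \<le> n" "\<tau> p = b" "\<tau> q = a"
    unfolding mem_inversions_map_upt by blast
  obtain i where i: "1 \<le> i" "i < n" "\<sigma> (Suc i) < \<sigma> i" "\<tau> = \<sigma> \<circ> transpose i (Suc i)"
    using assms unfolding weak_step_def by blast
  let ?t = "transpose i (Suc i)"
  have "\<not> (p = i \<and> q = Suc i)"
    using i \<open>a < b\<close> \<open>\<tau> p = b\<close> \<open>\<tau> q = a\<close> by auto
  then have "1 \<le> ?t p" "?t p < ?t q" "?t q \<le> n"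
    using i \<open>1 \<le> p\<close> \<open>p < q\<close> \<open>q \<le> n\<close> by (auto simp: transpose_def)
  moreover have "\<sigma> (?t p) = b" "\<sigma> (?t q) = a" using i \<open>\<tau> p = b\<close> \<open>\<tau> q = a\<close> by simp_all
  ultimately show "(a, b) \<in> inversions (map \<sigma> [1..<Suc n])"
    unfolding mem_inversions_map_upt using \<open>a < b\<close> by blast
qed

lemma weak_le_inversions:
  assumes "weak_le n \<tau> \<sigma>"
  shows "inversions (map \<tau> [1..<Suc n]) \<subseteq> inversions (map \<sigma> [1..<Suc n])"
  using assms unfolding weak_le_def
proof (induction rule: rtranclp_induct)
  case (step \<rho> \<rho>')
  then show ?case using weak_step_inversions[OF step.hyps(2)] by blast
qed simp

definition forest_perm :: "oforest \<Rightarrow> nat \<Rightarrow> nat" where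
  "forest_perm F = word_perm (postorder_word 0 F)"

lemma map_forest_perm:
  "F \<in> Ford n \<Longrightarrow> map (forest_perm F) [1..<Suc n] = postorder_word 0 F"
  using map_word_perm[of "postorder_word 0 F"] by (simp add: forest_perm_def Ford_def)

lemma inversions_forest_perm:
  assumes "F \<in> Ford n"
  shows "inversions (map (forest_perm F) [1..<Suc n]) = ancestor_pairs 0 F"
  unfolding map_forest_perm[OF assms] by (rule inversions_postorder_word)

lemma forest_perm_in_Av312:
  assumes "F \<in> Ford n"
  shows "forest_perm F \<in> Av312 n"
proof -
  have "fsize F = n" using assms by (simp add: Ford_def)
  then have "distinct (postorder_word 0 F)"
    "set (postorder_word 0 F) = {1..length (postorder_word 0 F)}"
    by (auto simp: distinct_postorder_word set_postorder_word)
  then have "forest_perm F permutes {1..n}"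
    using word_perm_permutes \<open>fsize F = n\<close> by (fastforce simp: forest_perm_def)
  moreover have "avoids312 n (forest_perm F)"
    using not_contains312_postorder_word[of 0 F]
    unfolding avoids312_iff_not_contains312 map_forest_perm[OF assms] .
  ultimately show ?thesis by (simp add: Av312_def)
qed

lemma Av312_forest_perm:
  assumes "\<sigma> \<in> Av312 n"
  obtains F where "F \<in> Ford n" "forest_perm F = \<sigma>"
proof -
  let ?w = "map \<sigma> [1..<Suc n]"
  have perm: "\<sigma> permutes {1..n}" and "\<not> contains312 ?w"
    using assms by (simp_all add: Av312_def avoids312_iff_not_contains312)
  moreover have "distinct ?w" "set ?w = {0<..0 + length ?w}"
    using permutes_inj_on[OF perm] permutes_image[OF perm]
    by (auto simp: distinct_map atLeastLessThanSuc_atLeastAtMost simp del: upt_Suc)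
  ultimately obtain F where F: "postorder_word 0 F = ?w" using postorder_word_surj by blast
  then have "F \<in> Ford n" using length_postorder_word[of 0 F] by (simp add: Ford_def del: upt_Suc)
  moreover have "forest_perm F = \<sigma>" using F word_perm_map[OF perm] by (simp add: forest_perm_def)
  ultimately show ?thesis by (rule that)
qed

lemma bij_betw_forest_perm: "bij_betw forest_perm (Ford n) (Av312 n)"
proof (rule bij_betw_imageI)
  show "inj_on forest_perm (Ford n)"
  proof (rule inj_onI)
    fix F G assume "F \<in> Ford n" "G \<in> Ford n" "forest_perm F = forest_perm G"
    then have "ancestor_pairs 0 F = ancestor_pairs 0 G"
      using inversions_forest_perm by metis
    then show "F = G" using ancestor_pairs_inj \<open>F \<in> Ford n\<close> \<open>G \<in> Ford n\<close> by (simp add: Ford_def)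
  qed
  show "forest_perm ` Ford n = Av312 n"
    using forest_perm_in_Av312 Av312_forest_perm by blast
qed

lemma forest_le_iff_weak_le:
  assumes "F \<in> Ford n" "G \<in> Ford n"
  shows "forest_le F G \<longleftrightarrow> weak_le n (forest_perm F) (forest_perm G)"
proof
  assume "forest_le F G"
  then have "swap_step\<^sup>*\<^sup>* (postorder_word 0 G) (postorder_word 0 F)"
    unfolding forest_le_def
    by (induction rule: rtranclp_induct) (auto intro: rtranclp_trans forest_step_swap_steps)
  then show "weak_le n (forest_perm F) (forest_perm G)"
    using swap_steps_weak_steps assms by (fastforce simp: weak_le_def forest_perm_def Ford_def)
next
  assume "weak_le n (forest_perm F) (forest_perm G)"
  then have "ancestor_pairs 0 F \<subseteq> ancestor_pairs 0 G"
    using weak_le_inversions inversions_forest_perm assms by metis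
  then show "forest_le F G"
    using ancestor_pairs_subset_imp_steps assms by (simp add: forest_le_def Ford_def)
qed

theorem theorem4p7:
  fixes n :: nat
  shows "\<exists>f. bij_betw f (Ford n) (Av312 n) \<and>
    (\<forall>F\<in>Ford n. \<forall>G\<in>Ford n. forest_le F G \<longleftrightarrow> weak_le n (f F) (f G))"
  using bij_betw_forest_perm forest_le_iff_weak_le by blast

end
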